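(* Let $f$ be a transcendental entire function and let $P$ be a bounded periodic component of the Fatou set $F(f)$. Then $\partial P \cap BU(f) = \emptyset$.
   Context: For an entire function $f$, $f^n$ denotes the $n$-th iterate. The Fatou set $F(f)$ is the set of points having a neighbourhood on which the family $\{f^n\}$ is normal; a component $P$ of $F(f)$ is periodic if $f^p(P)\subset P$ for some $p\ge 1$. The escaping set is $I(f)=\{z\in\mathbb{C}: f^n(z)\to\infty \text{ as } n\to\infty\}$, the set of points with bounded orbit is $K(f)=\{z\in\mathbb{C}: \text{there is } R>0 \text{ with } |f^n(z)|\le R \text{ for all } n\ge 0\}$, and the Bungee set is $BU(f)=\mathbb{C}\setminus (I(f)\cup K(f))$, i.e. the set of $z$ whose orbit is unbounded but does not tend to $\infty$ (equivalently, there are sequences $n_k\to\infty$, $m_k\to\infty$ and $R>0$ with $|f^{n_k}(z)|\le R$ for all $k$ and $f^{m_k}(z)\to\infty$). *)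

theory Defs
  imports "HOL-Complex_Analysis.Complex_Analysis"
begin

definition transcendental_entire :: "(complex \<Rightarrow> complex) \<Rightarrow> bool" where
  "transcendental_entire f \<longleftrightarrow> f holomorphic_on UNIV \<and> \<not> (\<exists>p. \<forall>z. f z = poly p z)"

text \<open>Normality (in the sense of Montel, with respect to the spherical metric) of the family
  of iterates on an open set U: every sequence of iterates has a subsequence converging
  locally uniformly on U either to a (finite) limit function or to infinity.\<close>
definition normal_iterates_on :: "(complex \<Rightarrow> complex) \<Rightarrow> complex set \<Rightarrow> bool" where
  "normal_iterates_on f U \<longleftrightarrow>
     (\<forall>s :: nat \<Rightarrow> nat. \<exists>r :: nat \<Rightarrow> nat. strict_mono r \<and>
        ((\<exists>g. \<forall>K. compact K \<and> K \<subseteq> U \<longrightarrow>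
              uniform_limit K (\<lambda>k. (f ^^ s (r k))) g sequentially)
         \<or> (\<forall>K. compact K \<and> K \<subseteq> U \<longrightarrow>
              (\<forall>R::real. eventually (\<lambda>k. \<forall>z\<in>K. R < norm ((f ^^ s (r k)) z)) sequentially))))"

definition fatou_set :: "(complex \<Rightarrow> complex) \<Rightarrow> complex set" where
  "fatou_set f = {z. \<exists>U. open U \<and> z \<in> U \<and> normal_iterates_on f U}"

definition periodic_fatou_component :: "(complex \<Rightarrow> complex) \<Rightarrow> complex set \<Rightarrow> bool" where
  "periodic_fatou_component f P \<longleftrightarrow>
     P \<in> components (fatou_set f) \<and> (\<exists>p::nat. p \<ge> 1 \<and> (f ^^ p) ` P \<subseteq> P)"

definition escaping_set :: "(complex \<Rightarrow> complex) \<Rightarrow> complex set" where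
  "escaping_set f = {z. filterlim (\<lambda>n. (f ^^ n) z) at_infinity sequentially}"

definition bounded_orbit_set :: "(complex \<Rightarrow> complex) \<Rightarrow> complex set" where
  "bounded_orbit_set f = {z. \<exists>R>0. \<forall>n. norm ((f ^^ n) z) \<le> R}"

definition bungee_set :: "(complex \<Rightarrow> complex) \<Rightarrow> complex set" where
  "bungee_set f = UNIV - (escaping_set f \<union> bounded_orbit_set f)"

end

theory Submission
  imports Defs
begin

text \<open>Only continuity of \<open>f\<close> and boundedness of \<open>P\<close> matter: the closure of \<open>P\<close> is a compact
  set mapped into itself by \<open>f\<^sup>p\<close>, so the orbit of any of its points stays in the compact set
  \<open>\<Union>j<p. f\<^sup>j(closure P)\<close>.\<close>

lemma continuous_on_funpow:
  fixes f :: "'a::topological_space \<Rightarrow> 'a"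
  assumes "continuous_on UNIV f"
  shows "continuous_on UNIV (f ^^ n)"
proof (induction n)
  case 0
  then show ?case by (simp add: continuous_on_id)
next
  case (Suc n)
  have "continuous_on UNIV (f \<circ> (f ^^ n))"
    by (rule continuous_on_compose[OF Suc continuous_on_subset[OF assms]]) simp
  then show ?case by simp
qed

lemma funpow_mult_mem_invariant:
  assumes "(f ^^ p) ` S \<subseteq> S" and "z \<in> S"
  shows "(f ^^ (p * k)) z \<in> S"
proof -
  have "((f ^^ p) ^^ k) z \<in> S"
    using assms by (induction k) auto
  then show ?thesis by (simp add: funpow_mult)
qed

lemma bounded_orbit_of_compact_invariant:
  fixes f :: "'a::metric_space \<Rightarrow> 'a"
  assumes "continuous_on UNIV f" and "compact C" and "(f ^^ p) ` C \<subseteq> C"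
    and "p > 0" and "z \<in> C"
  shows "bounded (range (\<lambda>n. (f ^^ n) z))"
proof -
  have "(f ^^ n) z \<in> (\<Union>j<p. (f ^^ j) ` C)" for n
  proof -
    have "(f ^^ n) z = (f ^^ (n mod p)) ((f ^^ (p * (n div p))) z)"
      by (metis funpow_add comp_apply mod_mult_div_eq add.commute)
    moreover have "n mod p < p" using \<open>p > 0\<close> by simp
    ultimately show ?thesis
      using funpow_mult_mem_invariant[OF assms(3,5)] by blast
  qed
  moreover have "compact (\<Union>j<p. (f ^^ j) ` C)"
    using assms(1,2) by (intro compact_UN compact_continuous_image)
      (auto intro: continuous_on_subset[OF continuous_on_funpow])
  ultimately show ?thesis
    by (meson bounded_subset compact_imp_bounded image_subsetI)
qed

lemma bounded_orbit_set_iff: "z \<in> bounded_orbit_set f \<longleftrightarrow> bounded (range (\<lambda>n. (f ^^ n) z))"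
  unfolding bounded_orbit_set_def bounded_pos by auto

theorem theorem1:
  fixes f :: "complex \<Rightarrow> complex" and P :: "complex set"
  assumes "transcendental_entire f"
    and "periodic_fatou_component f P"
    and "bounded P"
  shows "frontier P \<inter> bungee_set f = {}"
proof -
  obtain p :: nat where "p \<ge> 1" and invariant: "(f ^^ p) ` P \<subseteq> P"
    using assms(2) unfolding periodic_fatou_component_def by blast
  have cont: "continuous_on UNIV f"
    using assms(1) holomorphic_on_imp_continuous_on unfolding transcendental_entire_def by blast
  have "(f ^^ p) ` closure P \<subseteq> closure P"
    using invariant closure_subset
    by (intro image_closure_subset) (auto intro: continuous_on_subset[OF continuous_on_funpow[OF cont]])
  then have "closure P \<subseteq> bounded_orbit_set f"
    using bounded_orbit_of_compact_invariant[OF cont _ _ _, of "closure P" p] \<open>p \<ge> 1\<close> assms(3)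
    by (auto simp: bounded_orbit_set_iff compact_closure)
  then show ?thesis
    unfolding bungee_set_def frontier_def by auto
qed

end
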